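(* Under assumptions (A1)–(A6), for (almost) every $x$ such that $P(Y(1)=1,M(1)=0\mid X=x)>0$, $$\zeta'(x)=1-\frac{\mu_{00}(x)}{\mu_{10}(x)},\qquad \delta'(x)=\zeta'(x),\qquad \psi'(x)=0.$$
   Context: Observed data $O=(X,A,M,Y)$ with covariates $X\in\mathbb{R}^d$, binary exposure $A$, binary mediator $M$, binary outcome $Y$. For $a,m\in\{0,1\}$, $Y(a,m)$ is the potential outcome under $A=a,M=m$, $M(a)$ the potential mediator, $Y(a):=Y(a,M(a))$, cross-world $Y(a,M(a'))$ by substitution, all on a common probability space with $O$. $\mu_{am}(x)=P(Y=1\mid A=a,M=m,X=x)$. Define $\delta'(x)=P(Y(0)=0\mid Y(1,M(1))=1,M(1)=0,X=x)$, $\psi'(x)=P(Y(1,M(0))=0,\,Y(0,M(0))=0\mid Y(1,M(1))=1,M(1)=0,X=x)$, $\zeta'(x)=P(Y(1,M(0))=1,\,Y(0,M(0))=0\mid Y(1,M(1))=1,M(1)=0,X=x)$. Assumptions: (A1) $A=a,M=m\Rightarrow Y=Y(a,m)$ and $A=a\Rightarrow M=M(a)$. (A2) $Y(1,1)\ge Y(1,0)\ge Y(0,0)$, $Y(1,1)\ge Y(0,1)$, $M(1)\ge M(0)$. (A3) $A\perp\{Y(1,1),Y(1,0),Y(0,1),Y(0,0),M(1),M(0)\}\mid X$. (A4) $\{Y(1,1),Y(1,0),Y(0,1),Y(0,0)\}\perp\{M(1),M(0)\}\mid X$. (A5) for some $\epsilon>0$, $P\{\min_{a,m}P(A=a,M=m\mid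 X)\ge\epsilon\}=1$. (A6) $P\{P(Y=1\mid A=1,M=1,X)\ge\epsilon\}=1$. *)

theory Defs
  imports "HOL-Probability.Probability"
begin

text \<open>Its value at w is P(E | X = X w).\<close>
definition cprob :: "'w measure \<Rightarrow> ('w \<Rightarrow> 'x::topological_space) \<Rightarrow> 'w set \<Rightarrow> 'w \<Rightarrow> real" where
  "cprob P X E = real_cond_exp P (vimage_algebra (space P) X borel) (indicator E)"

definition ccprob :: "'w measure \<Rightarrow> ('w \<Rightarrow> 'x::topological_space) \<Rightarrow> 'w set \<Rightarrow> 'w set \<Rightarrow> 'w \<Rightarrow> real" where
  "ccprob P X E F w = cprob P X (E \<inter> F) w / cprob P X F w"

definition cond_indep_disc :: "'w measure \<Rightarrow> ('w \<Rightarrow> 'x::topological_space) \<Rightarrow> ('w \<Rightarrow> 'u) \<Rightarrow> ('w \<Rightarrow> 'v) \<Rightarrow> bool" where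
  "cond_indep_disc P X U V \<longleftrightarrow>
     (\<forall>u v. AE w in P.
        cprob P X ({z\<in>space P. U z = u} \<inter> {z\<in>space P. V z = v}) w
          = cprob P X {z\<in>space P. U z = u} w * cprob P X {z\<in>space P. V z = v} w)"

end

theory Submission
  imports Defs
begin

text \<open>On the event C = {Y(1,M(1)) = 1, M(1) = 0} monotonicity forces M(0) = 0, so C is
  {Y(1,0) = 1, M(1) = 0}, and on C the natural-direct-effect events only involve Y(1,0) and
  Y(0,0). Since Y(0,0) \<le> Y(1,0), the event {Y(1,0) = 1, Y(0,0) = 0} has conditional probability
  P(Y(1,0)=1|X) - P(Y(0,0)=1|X), and by cross-world independence (A4) each of these events
  factors against {M(1) = 0}; hence \<zeta>' = 1 - P(Y(0,0)=1|X)/P(Y(1,0)=1|X), \<delta>' = \<zeta>' and \<psi>' = 0.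
  Exposure ignorability (A3), consistency and (A4) identify P(Y(a,0)=1|X) with \<mu>(a,0),
  positivity (A5) making the ratios well defined.\<close>

lemma sigma_finite_subalgebra_vimage_algebra:
  assumes "prob_space P" "X \<in> borel_measurable P"
  shows "sigma_finite_subalgebra P (vimage_algebra (space P) X borel)"
proof -
  interpret prob_space P by fact
  have "subalgebra P (vimage_algebra (space P) X borel)"
    unfolding subalgebra_def
    using assms(2) by (auto simp: sets_vimage_algebra2 measurable_sets)
  then interpret finite_measure_subalgebra P "vimage_algebra (space P) X borel"
    by unfold_locales
  show ?thesis by (rule sigma_finite_subalgebra_axioms)
qed

lemma (in prob_space) integrable_real_indicator_event:
  "E \<in> events \<Longrightarrow> integrable M (indicator E :: _ \<Rightarrow> real)"
  by (intro integrable_real_indicator) (auto simp: less_top[symmetric])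

lemma cprob_empty:
  assumes "prob_space P" "X \<in> borel_measurable P"
  shows "AE w in P. cprob P X {} w = 0"
proof -
  interpret sigma_finite_subalgebra P "vimage_algebra (space P) X borel"
    using sigma_finite_subalgebra_vimage_algebra[OF assms] .
  have e: "indicator {} = (\<lambda>_. 0::real)" by (auto simp: fun_eq_iff)
  show ?thesis unfolding cprob_def e using real_cond_exp_F_meas[of "\<lambda>_. 0"] by simp
qed

lemma cprob_Un_disjoint:
  assumes "prob_space P" "X \<in> borel_measurable P" "E \<in> sets P" "G \<in> sets P" "E \<inter> G = {}"
  shows "AE w in P. cprob P X (E \<union> G) w = cprob P X E w + cprob P X G w"
proof -
  interpret prob_space P by fact
  interpret sigma_finite_subalgebra P "vimage_algebra (space P) X borel"
    using sigma_finite_subalgebra_vimage_algebra[OF assms(1,2)] .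
  have "indicator (E \<union> G) = (\<lambda>x. indicator E x + indicator G x :: real)"
    using assms(5) by (auto simp: indicator_def fun_eq_iff)
  then show ?thesis unfolding cprob_def
    by (auto intro!: real_cond_exp_add integrable_real_indicator_event assms(3,4))
qed

lemma cprob_UN_disjoint:
  assumes "prob_space P" "X \<in> borel_measurable P" "finite I"
    "disjoint_family_on E I" "\<And>i. i \<in> I \<Longrightarrow> E i \<in> sets P"
  shows "AE w in P. cprob P X (\<Union>i\<in>I. E i) w = (\<Sum>i\<in>I. cprob P X (E i) w)"
proof -
  interpret prob_space P by fact
  interpret sigma_finite_subalgebra P "vimage_algebra (space P) X borel"
    using sigma_finite_subalgebra_vimage_algebra[OF assms(1,2)] .
  define f where "f i = (if i \<in> I then indicator (E i) else (\<lambda>_. 0::real))" for i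
  have "integrable P (f i)" for i
    using assms(5) by (auto simp: f_def intro: integrable_real_indicator_event)
  then have "AE x in P. real_cond_exp P (vimage_algebra (space P) X borel) (\<lambda>x. \<Sum>i\<in>I. f i x) x
     = (\<Sum>i\<in>I. real_cond_exp P (vimage_algebra (space P) X borel) (f i) x)"
    by (rule real_cond_exp_sum)
  moreover have "indicator (\<Union>i\<in>I. E i) = (\<lambda>x. \<Sum>i\<in>I. f i x)"
    using indicator_UN_disjoint[OF assms(3,4)] by (auto simp: f_def)
  ultimately show ?thesis unfolding cprob_def by (auto simp: f_def)
qed

lemma cond_indep_disc_events:
  fixes U :: "'w \<Rightarrow> 'u::finite" and V :: "'w \<Rightarrow> 'v::finite"
  assumes "prob_space P" "X \<in> borel_measurable P" "cond_indep_disc P X U V"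
    and U_meas: "\<And>u. {z\<in>space P. U z = u} \<in> sets P"
    and V_meas: "\<And>v. {z\<in>space P. V z = v} \<in> sets P"
  shows "AE w in P. cprob P X ({z\<in>space P. U z \<in> S} \<inter> {z\<in>space P. V z \<in> T}) w
      = cprob P X {z\<in>space P. U z \<in> S} w * cprob P X {z\<in>space P. V z \<in> T} w"
proof -
  let ?U = "\<lambda>u. {z\<in>space P. U z = u}" and ?V = "\<lambda>v. {z\<in>space P. V z = v}"
  have atoms: "AE w in P. \<forall>u v. cprob P X (?U u \<inter> ?V v) w = cprob P X (?U u) w * cprob P X (?V v) w"
    using assms(3) unfolding cond_indep_disc_def by (simp add: AE_all_countable)
  have "{z\<in>space P. U z \<in> S} \<inter> {z\<in>space P. V z \<in> T} = (\<Union>uv\<in>S\<times>T. ?U (fst uv) \<inter> ?V (snd uv))"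
    by auto
  then have joint: "AE w in P. cprob P X ({z\<in>space P. U z \<in> S} \<inter> {z\<in>space P. V z \<in> T}) w =
     (\<Sum>uv\<in>S\<times>T. cprob P X (?U (fst uv) \<inter> ?V (snd uv)) w)"
    using cprob_UN_disjoint[OF assms(1,2), of "S \<times> T" "\<lambda>uv. ?U (fst uv) \<inter> ?V (snd uv)"]
    by (auto simp: disjoint_family_on_def intro: U_meas V_meas)
  have "{z\<in>space P. U z \<in> S} = (\<Union>u\<in>S. ?U u)" by auto
  then have marg_U: "AE w in P. cprob P X {z\<in>space P. U z \<in> S} w = (\<Sum>u\<in>S. cprob P X (?U u) w)"
    using cprob_UN_disjoint[OF assms(1,2), of S ?U] by (auto simp: disjoint_family_on_def U_meas)
  have "{z\<in>space P. V z \<in> T} = (\<Union>v\<in>T. ?V v)" by auto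
  then have marg_V: "AE w in P. cprob P X {z\<in>space P. V z \<in> T} w = (\<Sum>v\<in>T. cprob P X (?V v) w)"
    using cprob_UN_disjoint[OF assms(1,2), of T ?V] by (auto simp: disjoint_family_on_def V_meas)
  show ?thesis using atoms joint marg_U marg_V
    by eventually_elim (simp add: sum_product sum.cartesian_product case_prod_beta)
qed

locale mediation_model = prob_space P
  for P :: "'w measure" and X :: "'w \<Rightarrow> 'x::topological_space"
    and A Mo Yo :: "'w \<Rightarrow> bool"
    and Ypo :: "bool \<Rightarrow> bool \<Rightarrow> 'w \<Rightarrow> bool" and Mpo :: "bool \<Rightarrow> 'w \<Rightarrow> bool" +
  assumes X_meas: "X \<in> borel_measurable P"
    and A_meas [measurable]: "A \<in> measurable P (count_space UNIV)"
    and Mo_meas [measurable]: "Mo \<in> measurable P (count_space UNIV)"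
    and Yo_meas [measurable]: "Yo \<in> measurable P (count_space UNIV)"
    and Ypo_meas [measurable]: "\<And>a m. Ypo a m \<in> measurable P (count_space UNIV)"
    and Mpo_meas [measurable]: "\<And>a. Mpo a \<in> measurable P (count_space UNIV)"
    and consistency_Y: "\<And>w a m. w \<in> space P \<Longrightarrow> A w = a \<Longrightarrow> Mo w = m \<Longrightarrow> Yo w = Ypo a m w"
    and consistency_M: "\<And>w a. w \<in> space P \<Longrightarrow> A w = a \<Longrightarrow> Mo w = Mpo a w"
    and monotonicity: "\<And>w. w \<in> space P \<Longrightarrow>
               Ypo True False w \<le> Ypo True True w \<and> Ypo False False w \<le> Ypo True False w
             \<and> Ypo False True w \<le> Ypo True True w \<and> Mpo False w \<le> Mpo True w"
    and exposure_ignorable: "cond_indep_disc P X A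
               (\<lambda>w. (Ypo True True w, Ypo True False w, Ypo False True w, Ypo False False w,
                     Mpo True w, Mpo False w))"
    and cross_world_indep: "cond_indep_disc P X
               (\<lambda>w. (Ypo True True w, Ypo True False w, Ypo False True w, Ypo False False w))
               (\<lambda>w. (Mpo True w, Mpo False w))"
begin

lemma mediator_monotone: "z \<in> space P \<Longrightarrow> \<not> Mpo True z \<Longrightarrow> \<not> Mpo False z"
  using monotonicity by (auto simp: le_bool_def)

lemma outcome_monotone: "z \<in> space P \<Longrightarrow> Ypo False False z \<Longrightarrow> Ypo True False z"
  using monotonicity by (auto simp: le_bool_def)

lemma exposure_indep_potentials:
  "AE w in P. cprob P X ({z\<in>space P. A z = a} \<inter> {z\<in>space P. Q (Ypo True True z) (Ypo True False z)
        (Ypo False True z) (Ypo False False z) (Mpo True z) (Mpo False z)}) w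
     = cprob P X {z\<in>space P. A z = a} w * cprob P X {z\<in>space P. Q (Ypo True True z) (Ypo True False z)
        (Ypo False True z) (Ypo False False z) (Mpo True z) (Mpo False z)} w"
  using cond_indep_disc_events[OF prob_space_axioms X_meas exposure_ignorable,
      of "{a}" "{(y11, y10, y01, y00, m1, m0). Q y11 y10 y01 y00 m1 m0}"]
  by simp measurable

lemma potentials_indep_mediators:
  "AE w in P. cprob P X ({z\<in>space P. Q (Ypo True True z) (Ypo True False z) (Ypo False True z)
        (Ypo False False z)} \<inter> {z\<in>space P. R (Mpo True z) (Mpo False z)}) w
     = cprob P X {z\<in>space P. Q (Ypo True True z) (Ypo True False z) (Ypo False True z)
        (Ypo False False z)} w * cprob P X {z\<in>space P. R (Mpo True z) (Mpo False z)} w"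
  using cond_indep_disc_events[OF prob_space_axioms X_meas cross_world_indep,
      of "{(y11, y10, y01, y00). Q y11 y10 y01 y00}" "{(m1, m0). R m1 m0}"]
  by simp measurable

lemma principal_stratum_eq:
  "{z\<in>space P. Ypo True (Mpo True z) z \<and> \<not> Mpo True z} = {z\<in>space P. Ypo True False z \<and> \<not> Mpo True z}"
  by auto

lemma cprob_principal_stratum_factors:
  "AE w in P. cprob P X {z\<in>space P. Ypo True (Mpo True z) z \<and> \<not> Mpo True z} w
     = cprob P X {z\<in>space P. Ypo True False z} w * cprob P X {z\<in>space P. \<not> Mpo True z} w"
proof -
  have "{z\<in>space P. Ypo True False z} \<inter> {z\<in>space P. \<not> Mpo True z}
      = {z\<in>space P. Ypo True (Mpo True z) z \<and> \<not> Mpo True z}"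
    by auto
  then show ?thesis
    using potentials_indep_mediators[of "\<lambda>_ y10 _ _. y10" "\<lambda>m1 _. \<not> m1"] by simp
qed

lemma cprob_zeta_event_Int_stratum_factors:
  "AE w in P. cprob P X ({z\<in>space P. Ypo True (Mpo False z) z \<and> \<not> Ypo False (Mpo False z) z}
        \<inter> {z\<in>space P. Ypo True (Mpo True z) z \<and> \<not> Mpo True z}) w
     = cprob P X {z\<in>space P. Ypo True False z \<and> \<not> Ypo False False z} w
       * cprob P X {z\<in>space P. \<not> Mpo True z} w"
proof -
  have "{z\<in>space P. Ypo True False z \<and> \<not> Ypo False False z} \<inter> {z\<in>space P. \<not> Mpo True z}
      = {z\<in>space P. Ypo True (Mpo False z) z \<and> \<not> Ypo False (Mpo False z) z}
        \<inter> {z\<in>space P. Ypo True (Mpo True z) z \<and> \<not> Mpo True z}"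
    by (auto simp: mediator_monotone)
  then show ?thesis
    using potentials_indep_mediators[of "\<lambda>_ y10 _ y00. y10 \<and> \<not> y00" "\<lambda>m1 _. \<not> m1"] by simp
qed

lemma cprob_Y10_split:
  "AE w in P. cprob P X {z\<in>space P. Ypo True False z} w
     = cprob P X {z\<in>space P. Ypo True False z \<and> \<not> Ypo False False z} w
       + cprob P X {z\<in>space P. Ypo False False z} w"
proof -
  have "{z\<in>space P. Ypo True False z}
      = {z\<in>space P. Ypo True False z \<and> \<not> Ypo False False z} \<union> {z\<in>space P. Ypo False False z}"
    using outcome_monotone by auto
  moreover have "AE w in P.
      cprob P X ({z\<in>space P. Ypo True False z \<and> \<not> Ypo False False z} \<union> {z\<in>space P. Ypo False False z}) w
      = cprob P X {z\<in>space P. Ypo True False z \<and> \<not> Ypo False False z} w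
        + cprob P X {z\<in>space P. Ypo False False z} w"
    by (rule cprob_Un_disjoint[OF prob_space_axioms X_meas]) auto
  ultimately show ?thesis by simp
qed

lemma delta_event_Int_stratum:
  "{z\<in>space P. \<not> Ypo False (Mpo False z) z} \<inter> {z\<in>space P. Ypo True (Mpo True z) z \<and> \<not> Mpo True z}
   = {z\<in>space P. Ypo True (Mpo False z) z \<and> \<not> Ypo False (Mpo False z) z}
     \<inter> {z\<in>space P. Ypo True (Mpo True z) z \<and> \<not> Mpo True z}"
  by (auto simp: mediator_monotone)

lemma psi_event_Int_stratum:
  "{z\<in>space P. \<not> Ypo True (Mpo False z) z \<and> \<not> Ypo False (Mpo False z) z}
     \<inter> {z\<in>space P. Ypo True (Mpo True z) z \<and> \<not> Mpo True z} = {}"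
  by (auto simp: mediator_monotone)

lemma cprob_treated_unmediated_factors:
  "AE w in P. cprob P X {z\<in>space P. A z = True \<and> Mo z = False} w
     = cprob P X {z\<in>space P. A z = True} w * cprob P X {z\<in>space P. \<not> Mpo True z} w"
proof -
  have "{z\<in>space P. A z = True} \<inter> {z\<in>space P. \<not> Mpo True z} = {z\<in>space P. A z = True \<and> Mo z = False}"
    using consistency_M by fastforce
  then show ?thesis
    using exposure_indep_potentials[of True "\<lambda>_ _ _ _ m1 _. \<not> m1"] by simp
qed

lemma cprob_outcome_treated_unmediated_factors:
  "AE w in P. cprob P X ({z\<in>space P. Yo z} \<inter> {z\<in>space P. A z = True \<and> Mo z = False}) w
     = cprob P X {z\<in>space P. A z = True} w
       * cprob P X {z\<in>space P. Ypo True (Mpo True z) z \<and> \<not> Mpo True z} w"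
proof -
  have "{z\<in>space P. A z = True} \<inter> {z\<in>space P. Ypo True False z \<and> \<not> Mpo True z}
      = {z\<in>space P. Yo z} \<inter> {z\<in>space P. A z = True \<and> Mo z = False}"
    using consistency_Y consistency_M by fastforce
  then show ?thesis
    unfolding principal_stratum_eq using exposure_indep_potentials[of True "\<lambda>_ y10 _ _ m1 _. y10 \<and> \<not> m1"]
    by simp
qed

lemma cprob_untreated_unmediated_factors:
  "AE w in P. cprob P X {z\<in>space P. A z = False \<and> Mo z = False} w
     = cprob P X {z\<in>space P. A z = False} w * cprob P X {z\<in>space P. \<not> Mpo False z} w"
proof -
  have "{z\<in>space P. A z = False} \<inter> {z\<in>space P. \<not> Mpo False z} = {z\<in>space P. A z = False \<and> Mo z = False}"
    using consistency_M by fastforce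
  then show ?thesis
    using exposure_indep_potentials[of False "\<lambda>_ _ _ _ _ m0. \<not> m0"] by simp
qed

lemma cprob_outcome_untreated_unmediated_factors:
  "AE w in P. cprob P X ({z\<in>space P. Yo z} \<inter> {z\<in>space P. A z = False \<and> Mo z = False}) w
     = cprob P X {z\<in>space P. A z = False} w * cprob P X {z\<in>space P. Ypo False False z} w
       * cprob P X {z\<in>space P. \<not> Mpo False z} w"
proof -
  have "{z\<in>space P. A z = False} \<inter> {z\<in>space P. Ypo False False z \<and> \<not> Mpo False z}
      = {z\<in>space P. Yo z} \<inter> {z\<in>space P. A z = False \<and> Mo z = False}"
    using consistency_Y consistency_M by fastforce
  then have "AE w in P. cprob P X ({z\<in>space P. Yo z} \<inter> {z\<in>space P. A z = False \<and> Mo z = False}) w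
     = cprob P X {z\<in>space P. A z = False} w * cprob P X {z\<in>space P. Ypo False False z \<and> \<not> Mpo False z} w"
    using exposure_indep_potentials[of False "\<lambda>_ _ _ y00 _ m0. y00 \<and> \<not> m0"] by simp
  moreover have "{z\<in>space P. Ypo False False z} \<inter> {z\<in>space P. \<not> Mpo False z}
      = {z\<in>space P. Ypo False False z \<and> \<not> Mpo False z}"
    by auto
  then have "AE w in P. cprob P X {z\<in>space P. Ypo False False z \<and> \<not> Mpo False z} w
     = cprob P X {z\<in>space P. Ypo False False z} w * cprob P X {z\<in>space P. \<not> Mpo False z} w"
    using potentials_indep_mediators[of "\<lambda>_ _ _ y00. y00" "\<lambda>_ m0. \<not> m0"] by simp
  ultimately show ?thesis by eventually_elim (simp add: mult.assoc)
qed

lemma mu10_identifies_treated_outcome: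
  "AE w in P. cprob P X {z\<in>space P. A z = True \<and> Mo z = False} w \<noteq> 0 \<longrightarrow>
     ccprob P X {z\<in>space P. Yo z} {z\<in>space P. A z = True \<and> Mo z = False} w
     = cprob P X {z\<in>space P. Ypo True False z} w"
  using cprob_outcome_treated_unmediated_factors cprob_treated_unmediated_factors
    cprob_principal_stratum_factors
  by eventually_elim (simp add: ccprob_def)

lemma mu00_identifies_control_outcome:
  "AE w in P. cprob P X {z\<in>space P. A z = False \<and> Mo z = False} w \<noteq> 0 \<longrightarrow>
     ccprob P X {z\<in>space P. Yo z} {z\<in>space P. A z = False \<and> Mo z = False} w
     = cprob P X {z\<in>space P. Ypo False False z} w"
  using cprob_outcome_untreated_unmediated_factors cprob_untreated_unmediated_factors
  by eventually_elim (simp add: ccprob_def)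

lemma zeta_identified:
  "AE w in P. cprob P X {z\<in>space P. Ypo True (Mpo True z) z \<and> \<not> Mpo True z} w \<noteq> 0 \<longrightarrow>
     ccprob P X {z\<in>space P. Ypo True (Mpo False z) z \<and> \<not> Ypo False (Mpo False z) z}
       {z\<in>space P. Ypo True (Mpo True z) z \<and> \<not> Mpo True z} w
     = 1 - cprob P X {z\<in>space P. Ypo False False z} w / cprob P X {z\<in>space P. Ypo True False z} w"
  using cprob_zeta_event_Int_stratum_factors cprob_principal_stratum_factors cprob_Y10_split
proof eventually_elim
  case (elim w)
  let ?c = "\<lambda>E. cprob P X E w"
  have "?c {z\<in>space P. Ypo True False z \<and> \<not> Ypo False False z}
      = ?c {z\<in>space P. Ypo True False z} - ?c {z\<in>space P. Ypo False False z}"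
    using elim(3) by simp
  then show ?case
    unfolding ccprob_def elim(1) elim(2) by (auto simp: field_simps)
qed

lemma delta_eq_zeta:
  "ccprob P X {z\<in>space P. \<not> Ypo False (Mpo False z) z}
     {z\<in>space P. Ypo True (Mpo True z) z \<and> \<not> Mpo True z} w
   = ccprob P X {z\<in>space P. Ypo True (Mpo False z) z \<and> \<not> Ypo False (Mpo False z) z}
     {z\<in>space P. Ypo True (Mpo True z) z \<and> \<not> Mpo True z} w"
  unfolding ccprob_def delta_event_Int_stratum ..

lemma psi_vanishes:
  "AE w in P. ccprob P X {z\<in>space P. \<not> Ypo True (Mpo False z) z \<and> \<not> Ypo False (Mpo False z) z}
     {z\<in>space P. Ypo True (Mpo True z) z \<and> \<not> Mpo True z} w = 0"
  using cprob_empty[OF prob_space_axioms X_meas]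
  unfolding ccprob_def psi_event_Int_stratum by eventually_elim simp

end

theorem proposition11:
  fixes P :: "'w measure"
    and X :: "'w \<Rightarrow> real ^ 'd"
    and A Mo Yo :: "'w \<Rightarrow> bool"
    and Ypo :: "bool \<Rightarrow> bool \<Rightarrow> 'w \<Rightarrow> bool"
    and Mpo :: "bool \<Rightarrow> 'w \<Rightarrow> bool"
    and \<epsilon> :: real
  assumes prob: "prob_space P"
    and X_meas: "X \<in> borel_measurable P"
    and A_meas: "A \<in> measurable P (count_space UNIV)"
    and Mo_meas: "Mo \<in> measurable P (count_space UNIV)"
    and Yo_meas: "Yo \<in> measurable P (count_space UNIV)"
    and Ypo_meas: "\<And>a m. Ypo a m \<in> measurable P (count_space UNIV)"
    and Mpo_meas: "\<And>a. Mpo a \<in> measurable P (count_space UNIV)"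
    \<comment> \<open>(A1) consistency\<close>
    and A1_Y: "\<And>w a m. w \<in> space P \<Longrightarrow> A w = a \<Longrightarrow> Mo w = m \<Longrightarrow> Yo w = Ypo a m w"
    and A1_M: "\<And>w a. w \<in> space P \<Longrightarrow> A w = a \<Longrightarrow> Mo w = Mpo a w"
    \<comment> \<open>(A2) monotonicity\<close>
    and A2: "\<And>w. w \<in> space P \<Longrightarrow>
               Ypo True False w \<le> Ypo True True w \<and> Ypo False False w \<le> Ypo True False w
             \<and> Ypo False True w \<le> Ypo True True w \<and> Mpo False w \<le> Mpo True w"
    \<comment> \<open>(A3) exposure ignorability\<close>
    and A3: "cond_indep_disc P X A
               (\<lambda>w. (Ypo True True w, Ypo True False w, Ypo False True w, Ypo False False w,
                     Mpo True w, Mpo False w))"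
    \<comment> \<open>(A4) cross-world independence of potential outcomes and potential mediators\<close>
    and A4: "cond_indep_disc P X
               (\<lambda>w. (Ypo True True w, Ypo True False w, Ypo False True w, Ypo False False w))
               (\<lambda>w. (Mpo True w, Mpo False w))"
    \<comment> \<open>(A5), (A6) positivity\<close>
    and eps_pos: "\<epsilon> > 0"
    and A5: "AE w in P. \<forall>a m. cprob P X {z\<in>space P. A z = a \<and> Mo z = m} w \<ge> \<epsilon>"
    and A6: "AE w in P. ccprob P X {z\<in>space P. Yo z} {z\<in>space P. A z = True \<and> Mo z = True} w \<ge> \<epsilon>"
  shows "AE w in P.
           cprob P X {z\<in>space P. Ypo True (Mpo True z) z \<and> \<not> Mpo True z} w > 0 \<longrightarrow>
           (let C = {z\<in>space P. Ypo True (Mpo True z) z \<and> \<not> Mpo True z};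
                mu00 = ccprob P X {z\<in>space P. Yo z} {z\<in>space P. A z = False \<and> Mo z = False} w;
                mu10 = ccprob P X {z\<in>space P. Yo z} {z\<in>space P. A z = True \<and> Mo z = False} w;
                \<delta>' = ccprob P X {z\<in>space P. \<not> Ypo False (Mpo False z) z} C w;
                \<psi>' = ccprob P X {z\<in>space P. \<not> Ypo True (Mpo False z) z \<and> \<not> Ypo False (Mpo False z) z} C w;
                \<zeta>' = ccprob P X {z\<in>space P. Ypo True (Mpo False z) z \<and> \<not> Ypo False (Mpo False z) z} C w
            in \<zeta>' = 1 - mu00 / mu10 \<and> \<delta>' = \<zeta>' \<and> \<psi>' = 0)"
proof -
  interpret mediation_model P X A Mo Yo Ypo Mpo
    unfolding mediation_model_def mediation_model_axioms_def
    using prob X_meas A_meas Mo_meas Yo_meas Ypo_meas Mpo_meas A1_Y A1_M A2 A3 A4 by blast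
  have positivity: "AE w in P. cprob P X {z\<in>space P. A z = True \<and> Mo z = False} w > 0
      \<and> cprob P X {z\<in>space P. A z = False \<and> Mo z = False} w > 0"
    using A5
  proof eventually_elim
    case (elim w)
    show ?case using elim[rule_format, of True False] elim[rule_format, of False False] eps_pos
      by simp
  qed
  show ?thesis
    using positivity mu10_identifies_treated_outcome mu00_identifies_control_outcome
      zeta_identified psi_vanishes
    by eventually_elim (auto simp: Let_def delta_eq_zeta)
qed

end
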